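(* For every prime $p$ there exists a linear $(2,p,p)$-AONT, i.e. an invertible $p\times p$ matrix over $\mathbb{F}_p$ all of whose $2\times2$ submatrices are invertible.
   Context: A linear $(t,s,q)$-AONT over $\mathbb{F}_q$ is given by an invertible $s\times s$ matrix $M$ over $\mathbb{F}_q$ (the transform being $(y_1,\dots,y_s)=(x_1,\dots,x_s)M^{-1}$); $M$ defines a linear $(t,s,q)$-AONT iff every $t\times t$ submatrix of $M$ is invertible. *)

theory Defs
  imports "Jordan_Normal_Form.DL_Submatrix" "Jordan_Normal_Form.Determinant"
begin

definition linear_AONT :: "nat \<Rightarrow> nat \<Rightarrow> 'a :: field mat \<Rightarrow> bool" where
  "linear_AONT t s M \<longleftrightarrow>
     M \<in> carrier_mat s s \<and> invertible_mat M \<and>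
     (\<forall>I J. I \<subseteq> {..<s} \<longrightarrow> J \<subseteq> {..<s} \<longrightarrow> card I = t \<longrightarrow> card J = t \<longrightarrow>
        invertible_mat (submatrix M I J))"

end

theory Submission
  imports Defs "HOL-Library.Cardinality" "HOL-Computational_Algebra.Polynomial" "HOL-Number_Theory.Residues"
begin

text \<open>Index rows and columns by the elements of \<open>\<bbbF>\<^sub>p\<close> and take \<open>M(x,y) = 1/(x - y)\<close>
  (\<open>0\<close> on the diagonal), except that row \<open>0\<close> is the indicator of \<open>y \<noteq> 0\<close>.
  A \<open>2 \<times> 2\<close> minor of the Cauchy part is \<open>1/((x\<^sub>1-y\<^sub>1)(x\<^sub>2-y\<^sub>2)) - 1/((x\<^sub>1-y\<^sub>2)(x\<^sub>2-y\<^sub>1))\<close>,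
  which vanishes only if \<open>(x\<^sub>1-x\<^sub>2)(y\<^sub>1-y\<^sub>2) = 0\<close>; minors through row \<open>0\<close> are checked directly.
  For invertibility, let \<open>V\<close> be in the kernel and \<open>Q\<close> its Lagrange interpolant, of degree
  \<open>< p\<close>. Up to a nonzero constant, \<open>Q'(x) = \<Sum>\<^sub>y V(y)/(x - y)\<close>, which vanishes at the \<open>p - 1\<close>
  points \<open>x \<noteq> 0\<close>; hence \<open>Q' = 0\<close>, and since \<open>deg Q < p = char \<bbbF>\<^sub>p\<close>, \<open>Q\<close> and so \<open>V\<close> are
  constant. Row \<open>0\<close> then forces \<open>V = 0\<close>. For \<open>p = 2\<close> the matrix is its own \<open>2 \<times> 2\<close>
  submatrix.\<close>

lemma CARD_field_ge_2: "2 \<le> CARD('a::{finite,field})"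
proof -
  have "card {0, 1::'a} \<le> CARD('a)"
    by (rule card_mono) auto
  then show ?thesis
    by simp
qed

lemma CHAR_eq_CARD_if_prime:
  assumes "prime CARD('a::{finite,ring_1})"
  shows "CHAR('a) = CARD('a)"
  using assms CHAR_dvd_CARD[where 'a='a] CHAR_not_1[where 'a='a]
  by (metis One_nat_def prime_nat_iff)

lemma prod_diff_eq_prod_nonzero:
  "(\<Prod>k\<in>UNIV-{x}. x - k) = (\<Prod>d\<in>UNIV-{0}. d :: 'a::{finite,field})"
  by (rule prod.reindex_bij_witness[of _ "\<lambda>d. x - d" "\<lambda>k. x - k"]) auto

lemma sum_inverse_diff_eq_0:
  fixes x :: "'a::{finite,field}"
  assumes "(2::'a) \<noteq> 0"
  shows "(\<Sum>k\<in>UNIV-{x}. inverse (x - k)) = 0"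
proof -
  have "(\<Sum>k\<in>UNIV-{x}. inverse (x - k)) = (\<Sum>d\<in>UNIV-{0}. inverse d)"
    by (rule sum.reindex_bij_witness[of _ "\<lambda>d. x - d" "\<lambda>k. x - k"]) auto
  also have "\<dots> = (\<Sum>d\<in>UNIV-{0}. d)"
    by (rule sum.reindex_bij_witness[of _ inverse inverse]) auto
  also have "\<dots> = (\<Sum>d\<in>UNIV. d)"
    by (simp add: sum_diff1)
  finally have sum_eq: "(\<Sum>k\<in>UNIV-{x}. inverse (x - k)) = (\<Sum>d\<in>UNIV. d)" .
  have "(\<Sum>d\<in>UNIV. d) = (\<Sum>d\<in>UNIV. - d :: 'a)"
    by (rule sum.reindex_bij_witness[of _ uminus uminus]) auto
  then have "2 * (\<Sum>d\<in>UNIV. d) = (0::'a)"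
    by (simp add: sum_negf)
  with assms sum_eq show ?thesis
    by simp
qed

lemma pderiv_sum: "pderiv (\<Sum>x\<in>A. f x) = (\<Sum>x\<in>A. pderiv (f x))"
  using higher_pderiv_sum[of 1 f A] by simp

lemma degree_pderiv_le: "degree (pderiv p) \<le> degree p - 1"
  by (rule degree_le) (simp add: coeff_pderiv coeff_eq_0)

lemma degree_eq_0_if_pderiv_eq_0:
  fixes q :: "'a::idom poly"
  assumes "pderiv q = 0" and "degree q < CHAR('a)"
  shows "degree q = 0"
proof (rule ccontr)
  assume "degree q \<noteq> 0"
  then obtain n where n: "degree q = Suc n"
    using not0_implies_Suc by blast
  have "\<not> CHAR('a) dvd Suc n"
    using assms(2) n by (auto dest: dvd_imp_le)
  then have "of_nat (Suc n) \<noteq> (0::'a)"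
    unfolding of_nat_eq_0_iff_char_dvd .
  moreover have "of_nat (Suc n) * lead_coeff q = 0"
    using coeff_pderiv[of q n] assms(1) n by simp
  moreover have "lead_coeff q \<noteq> 0"
    using n by (metis degree_0 leading_coeff_0_iff nat.distinct(1))
  ultimately show False
    by simp
qed

definition lagrange_basis :: "'a::{finite,field} \<Rightarrow> 'a poly" where
  "lagrange_basis y = (\<Prod>k\<in>UNIV-{y}. [:-k, 1:])"

lemma poly_lagrange_basis:
  "poly (lagrange_basis y) x = (if x = y then (\<Prod>d\<in>UNIV-{0}. d) else 0)"
proof -
  have "poly (lagrange_basis y) x = (\<Prod>k\<in>UNIV-{y}. x - k)"
    by (simp add: lagrange_basis_def poly_prod)
  then show ?thesis
    using prod_diff_eq_prod_nonzero[of y] by auto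
qed

lemma degree_lagrange_basis_le: "degree (lagrange_basis (y::'a::{finite,field})) \<le> CARD('a) - 1"
proof -
  have "degree (lagrange_basis y) \<le> (\<Sum>k\<in>UNIV-{y}. degree [:-k, 1:])"
    unfolding lagrange_basis_def using degree_prod_sum_le[of "UNIV-{y}" "\<lambda>k. [:-k, 1:]"]
    by (simp add: o_def)
  then show ?thesis
    by (simp add: card_Diff_singleton)
qed

lemma prod_diff_remove_eq:
  fixes x m :: "'a::{finite,field}"
  assumes "m \<noteq> x"
  shows "(\<Prod>k\<in>UNIV-{x}-{m}. x - k) = (\<Prod>d\<in>UNIV-{0}. d) * inverse (x - m)"
proof -
  have "(\<Prod>d\<in>UNIV-{0}. d) = (x - m) * (\<Prod>k\<in>UNIV-{x}-{m}. x - k)"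
    using prod_diff_eq_prod_nonzero[of x] prod.remove[of "UNIV-{x}" m "\<lambda>k. x - k"] assms
    by simp
  with assms show ?thesis
    by (simp add: field_simps)
qed

text \<open>At \<open>x = y\<close> the derivative is \<open>0 = inverse 0\<close>, because \<open>\<Sum>\<^sub>m 1/(y - m) = 0\<close>.\<close>

lemma poly_pderiv_lagrange_basis:
  fixes x y :: "'a::{finite,field}"
  assumes "(2::'a) \<noteq> 0"
  shows "poly (pderiv (lagrange_basis y)) x = (\<Prod>d\<in>UNIV-{0}. d) * inverse (x - y)"
proof -
  let ?C = "\<Prod>d\<in>UNIV-{0::'a}. d"
  have pderiv_eq: "poly (pderiv (lagrange_basis y)) x = (\<Sum>m\<in>UNIV-{y}. \<Prod>k\<in>UNIV-{y}-{m}. x - k)"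
    by (simp add: lagrange_basis_def pderiv_prod pderiv_pCons poly_sum poly_prod)
  show ?thesis
  proof (cases "x = y")
    case True
    have "(\<Sum>m\<in>UNIV-{y}. \<Prod>k\<in>UNIV-{y}-{m}. x - k) = ?C * (\<Sum>m\<in>UNIV-{y}. inverse (y - m))"
      using True by (simp add: prod_diff_remove_eq sum_distrib_left)
    with True pderiv_eq sum_inverse_diff_eq_0[OF assms] show ?thesis
      by simp
  next
    case False
    have "(\<Prod>k\<in>UNIV-{y}-{m}. x - k) = (if m = x then ?C * inverse (x - y) else 0)"
      if "m \<noteq> y" for m
    proof (cases "m = x")
      case True
      then have "UNIV-{y}-{m} = UNIV-{x}-{y}"
        by auto
      with True False prod_diff_remove_eq[of y x] show ?thesis
        by simp
    next
      case False
      with \<open>x \<noteq> y\<close> have "x \<in> UNIV-{y}-{m}"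
        by auto
      with False show ?thesis
        by (auto intro: prod_zero)
    qed
    then have "(\<Sum>m\<in>UNIV-{y}. \<Prod>k\<in>UNIV-{y}-{m}. x - k)
        = (\<Sum>m\<in>UNIV-{y}. if m = x then ?C * inverse (x - y) else 0)"
      by (intro sum.cong) auto
    with False pderiv_eq show ?thesis
      by simp
  qed
qed

definition lagrange_interpolant :: "('a::{finite,field} \<Rightarrow> 'a) \<Rightarrow> 'a poly" where
  "lagrange_interpolant V = (\<Sum>y\<in>UNIV. smult (V y) (lagrange_basis y))"

lemma poly_lagrange_interpolant:
  "poly (lagrange_interpolant V) x = (\<Prod>d\<in>UNIV-{0}. d) * V x"
proof -
  let ?C = "\<Prod>d\<in>UNIV-{0}. d"
  have "poly (lagrange_interpolant V) x = (\<Sum>y\<in>UNIV. V y * (if x = y then ?C else 0))"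
    by (simp add: lagrange_interpolant_def poly_sum poly_lagrange_basis)
  also have "\<dots> = (\<Sum>y\<in>UNIV. if x = y then V y * ?C else 0)"
    by (intro sum.cong) auto
  finally show ?thesis
    by simp
qed

lemma poly_pderiv_lagrange_interpolant:
  fixes V :: "'a::{finite,field} \<Rightarrow> 'a"
  assumes "(2::'a) \<noteq> 0"
  shows "poly (pderiv (lagrange_interpolant V)) x
    = (\<Prod>d\<in>UNIV-{0}. d) * (\<Sum>y\<in>UNIV. V y * inverse (x - y))"
proof -
  have "poly (pderiv (lagrange_interpolant V)) x
      = (\<Sum>y\<in>UNIV. V y * ((\<Prod>d\<in>UNIV-{0}. d) * inverse (x - y)))"
    by (simp add: lagrange_interpolant_def pderiv_sum pderiv_smult poly_sum
        poly_pderiv_lagrange_basis[OF assms])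
  then show ?thesis
    by (simp add: sum_distrib_left mult.left_commute)
qed

lemma degree_lagrange_interpolant_le:
  "degree (lagrange_interpolant (V :: 'a::{finite,field} \<Rightarrow> 'a)) \<le> CARD('a) - 1"
  unfolding lagrange_interpolant_def using degree_lagrange_basis_le
  by (intro degree_sum_le) (auto intro: order.trans[OF degree_smult_le])

lemma cauchy_sums_vanishing_imp_constant:
  fixes V :: "'a::{finite,field} \<Rightarrow> 'a"
  assumes prime_field: "CARD('a) = CHAR('a)" and two: "(2::'a) \<noteq> 0"
    and vanish: "\<And>x. x \<noteq> a \<Longrightarrow> (\<Sum>y\<in>UNIV. V y * inverse (x - y)) = 0"
  shows "V x = V z"
proof -
  let ?Q = "lagrange_interpolant V"
  note card_ge_2 = CARD_field_ge_2[where 'a='a]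
  have "pderiv ?Q = 0"
  proof (rule ccontr)
    assume "pderiv ?Q \<noteq> 0"
    have "CARD('a) - 1 = card (UNIV - {a})"
      by (simp add: card_Diff_singleton)
    also have "\<dots> \<le> card {x. poly (pderiv ?Q) x = 0}"
      using vanish by (intro card_mono) (auto simp: poly_pderiv_lagrange_interpolant[OF two])
    also have "\<dots> \<le> degree (pderiv ?Q)"
      using \<open>pderiv ?Q \<noteq> 0\<close> by (rule card_poly_roots_bound)
    also have "\<dots> \<le> CARD('a) - 2"
      using degree_pderiv_le[of ?Q] degree_lagrange_interpolant_le[of V] by simp
    finally show False
      using card_ge_2 by simp
  qed
  moreover have "degree ?Q < CHAR('a)"
    using degree_lagrange_interpolant_le[of V] prime_field card_ge_2 by simp
  ultimately have "degree ?Q = 0"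
    by (rule degree_eq_0_if_pderiv_eq_0)
  then have "poly ?Q x = poly ?Q z"
    by (metis degree_0_id poly_pCons poly_0 mult_zero_right add_0_right)
  then show ?thesis
    by (simp add: poly_lagrange_interpolant)
qed

lemma inverse_mult_eq_inverse_mult_iff:
  fixes u v w z :: "'a::field"
  shows "inverse u * inverse v = inverse w * inverse z \<longleftrightarrow> u * v = w * z"
  by (metis inverse_inverse_eq inverse_mult_distrib)

definition aont_entry :: "'a::field \<Rightarrow> 'a \<Rightarrow> 'a" where
  "aont_entry x y = (if x = 0 then (if y = 0 then 0 else 1) else inverse (x - y))"

lemma aont_entry_minor_ne_0:
  fixes x\<^sub>1 x\<^sub>2 y\<^sub>1 y\<^sub>2 :: "'a::field"
  assumes "x\<^sub>1 \<noteq> x\<^sub>2" "y\<^sub>1 \<noteq> y\<^sub>2"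
  shows "aont_entry x\<^sub>1 y\<^sub>1 * aont_entry x\<^sub>2 y\<^sub>2 - aont_entry x\<^sub>1 y\<^sub>2 * aont_entry x\<^sub>2 y\<^sub>1 \<noteq> 0"
proof -
  have "(x\<^sub>1 - y\<^sub>1) * (x\<^sub>2 - y\<^sub>2) - (x\<^sub>1 - y\<^sub>2) * (x\<^sub>2 - y\<^sub>1) = (x\<^sub>1 - x\<^sub>2) * (y\<^sub>1 - y\<^sub>2)"
    by (simp add: algebra_simps)
  then have cauchy: "(x\<^sub>1 - y\<^sub>1) * (x\<^sub>2 - y\<^sub>2) \<noteq> (x\<^sub>1 - y\<^sub>2) * (x\<^sub>2 - y\<^sub>1)"
    using assms by auto
  show ?thesis
    using assms cauchy
    by (auto simp: aont_entry_def inverse_mult_eq_inverse_mult_iff)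
qed

lemma aont_entry_kernel_trivial:
  fixes V :: "'a::{finite,field} \<Rightarrow> 'a"
  assumes prime_field: "CARD('a) = CHAR('a)" and two: "(2::'a) \<noteq> 0"
    and kernel: "\<And>x. (\<Sum>y\<in>UNIV. aont_entry x y * V y) = 0"
  shows "V z = 0"
proof -
  have "(\<Sum>y\<in>UNIV. V y * inverse (x - y)) = 0" if "x \<noteq> 0" for x
    using kernel[of x] that by (simp add: aont_entry_def mult.commute)
  then obtain \<kappa> where \<kappa>: "\<And>y. V y = \<kappa>"
    using cauchy_sums_vanishing_imp_constant[OF prime_field two] by blast
  have "0 = (\<Sum>y\<in>UNIV. aont_entry 0 y * V y)"
    using kernel by simp
  also have "\<dots> = (\<Sum>y\<in>UNIV-{0::'a}. \<kappa>)"
    using sum.remove[of UNIV 0 "\<lambda>y. aont_entry 0 y * V y"] by (simp add: aont_entry_def \<kappa>)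
  also have "\<dots> = of_nat (CARD('a) - 1) * \<kappa>"
    by (simp add: card_Diff_singleton)
  finally have "of_nat (CARD('a) - 1) * \<kappa> = 0" ..
  moreover have "of_nat (CARD('a) - 1) \<noteq> (0::'a)"
    unfolding of_nat_eq_0_iff_char_dvd
    using prime_field CARD_field_ge_2[where 'a='a] by (auto dest: dvd_imp_le)
  ultimately show ?thesis
    using \<kappa> by simp
qed

lemma invertible_mat_if_kernel_trivial:
  fixes A :: "'a::field mat"
  assumes A: "A \<in> carrier_mat n n"
    and kernel: "\<And>v. v \<in> carrier_vec n \<Longrightarrow> A *\<^sub>v v = 0\<^sub>v n \<Longrightarrow> v = 0\<^sub>v n"
  shows "invertible_mat A"
proof -
  have "det A \<noteq> 0"
    using det_0_iff_vec_prod_zero_field[OF A] kernel by blast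
  from det_non_zero_imp_unit[OF A this, unfolded Units_def, of "()"]
  obtain B where "B \<in> carrier_mat n n" "B * A = 1\<^sub>m n" "A * B = 1\<^sub>m n"
    by (auto simp: ring_mat_def)
  with A show ?thesis
    unfolding invertible_mat_def inverts_mat_def by auto
qed

lemma invertible_mat_2x2:
  fixes S :: "'a::field mat"
  assumes S: "S \<in> carrier_mat 2 2"
    and det: "S $$ (0,0) * S $$ (1,1) - S $$ (0,1) * S $$ (1,0) \<noteq> 0"
  shows "invertible_mat S"
proof (rule invertible_mat_if_kernel_trivial[OF S])
  fix v :: "'a vec"
  assume v: "v \<in> carrier_vec 2" and Sv: "S *\<^sub>v v = 0\<^sub>v 2"
  let ?a = "S $$ (0,0)" and ?b = "S $$ (0,1)" and ?c = "S $$ (1,0)" and ?d = "S $$ (1,1)"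
  have row0: "?a * v $ 0 + ?b * v $ 1 = 0"
    using arg_cong[OF Sv, of "\<lambda>w. w $ 0"] S v by (simp add: scalar_prod_def numeral_2_eq_2)
  have row1: "?c * v $ 0 + ?d * v $ 1 = 0"
    using arg_cong[OF Sv, of "\<lambda>w. w $ 1"] S v by (simp add: scalar_prod_def numeral_2_eq_2)
  have "(?a * ?d - ?b * ?c) * v $ 0 = ?d * (?a * v $ 0 + ?b * v $ 1) - ?b * (?c * v $ 0 + ?d * v $ 1)"
    by (simp add: algebra_simps)
  with row0 row1 det have v0: "v $ 0 = 0"
    by simp
  have "(?a * ?d - ?b * ?c) * v $ 1 = ?a * (?c * v $ 0 + ?d * v $ 1) - ?c * (?a * v $ 0 + ?b * v $ 1)"
    by (simp add: algebra_simps)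
  with row0 row1 det have v1: "v $ 1 = 0"
    by simp
  from v v0 v1 show "v = 0\<^sub>v 2"
    by (intro eq_vecI) (auto simp: less_2_cases_iff)
qed

lemma pick_lessThan:
  assumes "i < n"
  shows "pick {..<n} i = i"
proof -
  have "{a \<in> {..<n}. a < i} = {..<i}"
    using assms by auto
  then show ?thesis
    using pick_card_in_set[of i "{..<n}"] assms by simp
qed

lemma submatrix_lessThan:
  assumes "A \<in> carrier_mat m n"
  shows "submatrix A {..<m} {..<n} = A"
  using assms by (intro eq_matI) (auto simp: dim_submatrix submatrix_index pick_lessThan)

lemma invertible_submatrix_2x2:
  fixes A :: "'a::field mat"
  assumes A: "A \<in> carrier_mat m n"
    and I: "I \<subseteq> {..<m}" "card I = 2" and J: "J \<subseteq> {..<n}" "card J = 2"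
    and minors: "\<And>i\<^sub>1 i\<^sub>2 j\<^sub>1 j\<^sub>2. i\<^sub>1 < i\<^sub>2 \<Longrightarrow> i\<^sub>2 < m \<Longrightarrow> j\<^sub>1 < j\<^sub>2 \<Longrightarrow> j\<^sub>2 < n \<Longrightarrow>
        A $$ (i\<^sub>1, j\<^sub>1) * A $$ (i\<^sub>2, j\<^sub>2) - A $$ (i\<^sub>1, j\<^sub>2) * A $$ (i\<^sub>2, j\<^sub>1) \<noteq> 0"
  shows "invertible_mat (submatrix A I J)"
proof -
  have rows: "{i. i < dim_row A \<and> i \<in> I} = I" and cols: "{j. j < dim_col A \<and> j \<in> J} = J"
    using A I(1) J(1) by auto
  have S: "submatrix A I J \<in> carrier_mat 2 2"
    using dim_submatrix[of A I J] unfolding rows cols I(2) J(2) by auto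
  have entry: "submatrix A I J $$ (r, c) = A $$ (pick I r, pick J c)" if "r < 2" "c < 2" for r c
    using that by (intro submatrix_index) (simp_all only: rows cols I(2) J(2))
  have "pick I 0 < pick I 1" "pick I 1 \<in> I" "pick J 0 < pick J 1" "pick J 1 \<in> J"
    by (intro pick_mono pick_in_set; simp add: I(2) J(2))+
  with I J have "A $$ (pick I 0, pick J 0) * A $$ (pick I 1, pick J 1)
      - A $$ (pick I 0, pick J 1) * A $$ (pick I 1, pick J 0) \<noteq> 0"
    by (intro minors) auto
  then show ?thesis
    by (intro invertible_mat_2x2[OF S]) (simp add: entry)
qed

lemma invertible_mat_if_kernel_trivial_enum:
  fixes f :: "'i \<Rightarrow> 'i \<Rightarrow> 'a::field" and e :: "nat \<Rightarrow> 'i"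
  assumes e: "bij_betw e {..<n} UNIV"
    and kernel: "\<And>V z. (\<And>x. (\<Sum>y\<in>UNIV. f x y * V y) = 0) \<Longrightarrow> V z = 0"
  shows "invertible_mat (mat n n (\<lambda>(i, j). f (e i) (e j)))" (is "invertible_mat ?M")
proof (rule invertible_mat_if_kernel_trivial)
  show "?M \<in> carrier_mat n n"
    by simp
  fix v :: "'a vec"
  assume v: "v \<in> carrier_vec n" and Mv: "?M *\<^sub>v v = 0\<^sub>v n"
  define V where "V y = v $ inv_into {..<n} e y" for y
  have V_e: "V (e j) = v $ j" if "j < n" for j
    using e that by (simp add: V_def bij_betw_inv_into_left)
  have "(\<Sum>y\<in>UNIV. f x y * V y) = 0" for x
  proof -
    obtain i where i: "i < n" "x = e i"
      using e by (metis UNIV_I bij_betw_def imageE lessThan_iff)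
    have "(\<Sum>y\<in>UNIV. f x y * V y) = (\<Sum>j<n. f x (e j) * V (e j))"
      using sum.reindex_bij_betw[OF e, of "\<lambda>y. f x y * V y"] by simp
    also have "\<dots> = (?M *\<^sub>v v) $ i"
      using i v by (simp add: scalar_prod_def V_e atLeast0LessThan)
    also have "\<dots> = 0"
      using Mv i by simp
    finally show ?thesis .
  qed
  then have "V y = 0" for y
    by (rule kernel)
  with v V_e show "v = 0\<^sub>v n"
    by (intro eq_vecI) auto
qed

lemma invertible_submatrix_2x2_enum:
  fixes f :: "'i \<Rightarrow> 'i \<Rightarrow> 'a::field" and e :: "nat \<Rightarrow> 'i"
  assumes e: "inj_on e {..<n}"
    and minors: "\<And>x\<^sub>1 x\<^sub>2 y\<^sub>1 y\<^sub>2. x\<^sub>1 \<noteq> x\<^sub>2 \<Longrightarrow> y\<^sub>1 \<noteq> y\<^sub>2 \<Longrightarrow>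
        f x\<^sub>1 y\<^sub>1 * f x\<^sub>2 y\<^sub>2 - f x\<^sub>1 y\<^sub>2 * f x\<^sub>2 y\<^sub>1 \<noteq> 0"
    and I: "I \<subseteq> {..<n}" "card I = 2" and J: "J \<subseteq> {..<n}" "card J = 2"
  shows "invertible_mat (submatrix (mat n n (\<lambda>(i, j). f (e i) (e j))) I J)"
proof (rule invertible_submatrix_2x2[OF _ I J])
  let ?M = "mat n n (\<lambda>(i, j). f (e i) (e j))"
  show "?M \<in> carrier_mat n n"
    by simp
  fix i\<^sub>1 i\<^sub>2 j\<^sub>1 j\<^sub>2
  assume i: "i\<^sub>1 < i\<^sub>2" "i\<^sub>2 < n" and j: "j\<^sub>1 < j\<^sub>2" "j\<^sub>2 < n"
  with e have "e i\<^sub>1 \<noteq> e i\<^sub>2" "e j\<^sub>1 \<noteq> e j\<^sub>2"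
    by (auto dest: inj_onD)
  then have "f (e i\<^sub>1) (e j\<^sub>1) * f (e i\<^sub>2) (e j\<^sub>2) - f (e i\<^sub>1) (e j\<^sub>2) * f (e i\<^sub>2) (e j\<^sub>1) \<noteq> 0"
    by (rule minors)
  with i j show "?M $$ (i\<^sub>1, j\<^sub>1) * ?M $$ (i\<^sub>2, j\<^sub>2) - ?M $$ (i\<^sub>1, j\<^sub>2) * ?M $$ (i\<^sub>2, j\<^sub>1) \<noteq> 0"
    by (subst (1 2 3 4) index_mat) auto
qed

theorem theorem2p12:
  fixes p :: nat
  assumes "prime p" and "card (UNIV :: 'a :: {finite, field} set) = p"
  shows "\<exists>M :: 'a mat. linear_AONT 2 p M"
proof -
  have prime_field: "CARD('a) = CHAR('a)"
    using CHAR_eq_CARD_if_prime[where 'a='a] assms by simp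
  obtain e :: "nat \<Rightarrow> 'a" where e: "bij_betw e {..<p} UNIV"
    using ex_bij_betw_nat_finite[of "UNIV :: 'a set"] assms(2) by (auto simp: atLeast0LessThan)
  define M where "M = mat p p (\<lambda>(i, j). aont_entry (e i) (e j))"
  have M: "M \<in> carrier_mat p p"
    by (simp add: M_def)
  have submatrices: "invertible_mat (submatrix M I J)"
    if "I \<subseteq> {..<p}" "card I = 2" "J \<subseteq> {..<p}" "card J = 2" for I J
    unfolding M_def using bij_betw_imp_inj_on[OF e] aont_entry_minor_ne_0 that
    by (rule invertible_submatrix_2x2_enum)
  have "invertible_mat M"
  proof (cases "p = 2")
    case True
    then have "invertible_mat (submatrix M {..<p} {..<p})"
      by (intro submatrices) auto
    then show ?thesis
      by (simp only: submatrix_lessThan[OF M])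
  next
    case False
    then have two: "(2::'a) \<noteq> 0"
      using prime_field assms prime_ge_2_nat[OF assms(1)]
      by (auto simp: of_nat_eq_0_iff_char_dvd[of 2, simplified] dest: dvd_imp_le)
    show ?thesis
      unfolding M_def
    proof (rule invertible_mat_if_kernel_trivial_enum[OF e])
      show "V z = 0" if "\<And>x. (\<Sum>y\<in>UNIV. aont_entry x y * V y) = 0" for V :: "'a \<Rightarrow> 'a" and z
        using prime_field two that by (rule aont_entry_kernel_trivial)
    qed
  qed
  with M submatrices show ?thesis
    unfolding linear_AONT_def by blast
qed

end
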